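(* Let $\rho:\omega_1\setminus\{0\}\to\omega_1$ be the generic regressive map and let $A\subseteq\omega_1$ be countable and $\rho$-closed. Then there exist ordinals $\beta,\gamma<\omega_1$ with $\beta,\gamma\notin A$, $\beta\neq\gamma$, $\gamma\notin\operatorname{Succ}_\rho(\beta)$, and $\operatorname{Succ}_\rho(\beta)\cap A=\varnothing$.
   Context: $\mathbb P_0$ is the forcing of finite partial regressive functions on $\omega_1$ (finite partial $p:\omega_1\setminus\{0\}\to\omega_1$ with $p(\alpha)<\alpha$); for a $V$-generic $G_0$, $\rho$ is the induced total regressive map $\omega_1\setminus\{0\}\to\omega_1$. $\operatorname{Succ}_\rho(\xi)=\{\eta<\omega_1:\rho(\eta)=\xi\}$. $A$ is $\rho$-closed if $\rho(\eta)\in A$ whenever $0\neq\eta\in A$. *)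

theory Defs
  imports Main "HOL-Library.Countable_Set"
begin

text \<open>omega_1 is modelled as a well-ordered type that is uncountable but all of whose
proper initial segments are countable (this characterises omega_1 up to isomorphism).\<close>

definition omega1_type :: "'a::wellorder itself \<Rightarrow> bool" where
  "omega1_type _ \<longleftrightarrow> \<not> countable (UNIV :: 'a set) \<and> (\<forall>x::'a. countable {y. y < x})"

definition ord0 :: "'a::wellorder" where
  "ord0 = (LEAST x. True)"

definition regressive :: "('a::wellorder \<Rightarrow> 'a) \<Rightarrow> bool" where
  "regressive \<rho> \<longleftrightarrow> (\<forall>\<eta>. \<eta> \<noteq> ord0 \<longrightarrow> \<rho> \<eta> < \<eta>)"

definition Succ :: "('a::wellorder \<Rightarrow> 'a) \<Rightarrow> 'a \<Rightarrow> 'a set" where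
  "Succ \<rho> \<xi> = {\<eta>. \<eta> \<noteq> ord0 \<and> \<rho> \<eta> = \<xi>}"

definition rho_closed :: "('a::wellorder \<Rightarrow> 'a) \<Rightarrow> 'a set \<Rightarrow> bool" where
  "rho_closed \<rho> A \<longleftrightarrow> (\<forall>\<eta>\<in>A. \<eta> \<noteq> ord0 \<longrightarrow> \<rho> \<eta> \<in> A)"

end

theory Submission
  imports Defs
begin

text \<open>Since \<open>A\<close> is \<open>\<rho>\<close>-closed, every
\<open>\<beta> \<notin> A\<close> has \<open>Succ \<rho> \<beta> \<inter> A = {}\<close>; and since a point lies in \<open>Succ \<rho> \<beta>\<close> for at most
one \<open>\<beta>\<close>, among three distinct ordinals \<open>\<beta>\<^sub>1, \<beta>\<^sub>2, \<gamma>\<close> outside the countable set \<open>A\<close>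
one of the pairs \<open>(\<beta>\<^sub>1, \<gamma>)\<close>, \<open>(\<beta>\<^sub>2, \<gamma>)\<close> works.\<close>

lemma Succ_Int_rho_closed_empty:
  assumes "rho_closed \<rho> A" and "\<beta> \<notin> A"
  shows "Succ \<rho> \<beta> \<inter> A = {}"
  using assms unfolding rho_closed_def Succ_def by auto

lemma Succ_disjoint:
  assumes "\<beta> \<noteq> \<beta>'"
  shows "Succ \<rho> \<beta> \<inter> Succ \<rho> \<beta>' = {}"
  using assms unfolding Succ_def by auto

lemma infinite_obtain_three_distinct:
  assumes "infinite S"
  obtains x y z where "x \<in> S" "y \<in> S" "z \<in> S" "x \<noteq> y" "x \<noteq> z" "y \<noteq> z"
proof -
  obtain x where x: "x \<in> S"
    using assms by (metis ex_in_conv finite.emptyI)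
  obtain y where y: "y \<in> S - {x}"
    using assms by (metis ex_in_conv finite.emptyI finite_Diff2 finite_insert)
  obtain z where z: "z \<in> S - {x, y}"
    using assms by (metis ex_in_conv finite.emptyI finite_Diff2 finite_insert)
  show thesis
    using x y z by (intro that[of x y z]) auto
qed

lemma omega1_type_infinite_Compl_countable:
  assumes "omega1_type TYPE('a::wellorder)" and "countable (A :: 'a set)"
  shows "infinite (- A)"
proof -
  have "uncountable (UNIV - A)"
    using assms by (simp add: omega1_type_def uncountable_minus_countable)
  then show ?thesis
    using countable_finite by (auto simp: Compl_eq_Diff_UNIV)
qed

theorem lemma2p6:
  fixes \<rho> :: "'a::wellorder \<Rightarrow> 'a" and A :: "'a set"
  assumes "omega1_type TYPE('a)"
    and "regressive \<rho>"
    and "countable A"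
    and "rho_closed \<rho> A"
  shows "\<exists>\<beta> \<gamma>. \<beta> \<notin> A \<and> \<gamma> \<notin> A \<and> \<beta> \<noteq> \<gamma> \<and> \<gamma> \<notin> Succ \<rho> \<beta> \<and> Succ \<rho> \<beta> \<inter> A = {}"
proof -
  obtain \<beta>\<^sub>1 \<beta>\<^sub>2 \<gamma> where outside: "\<beta>\<^sub>1 \<notin> A" "\<beta>\<^sub>2 \<notin> A" "\<gamma> \<notin> A"
    and distinct: "\<beta>\<^sub>1 \<noteq> \<beta>\<^sub>2" "\<beta>\<^sub>1 \<noteq> \<gamma>" "\<beta>\<^sub>2 \<noteq> \<gamma>"
    using omega1_type_infinite_Compl_countable[OF assms(1,3)]
    by (rule infinite_obtain_three_distinct) auto
  have "\<gamma> \<notin> Succ \<rho> \<beta>\<^sub>1 \<or> \<gamma> \<notin> Succ \<rho> \<beta>\<^sub>2"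
    using Succ_disjoint[OF \<open>\<beta>\<^sub>1 \<noteq> \<beta>\<^sub>2\<close>] by blast
  then obtain \<beta> where "\<beta> \<in> {\<beta>\<^sub>1, \<beta>\<^sub>2}" and "\<gamma> \<notin> Succ \<rho> \<beta>"
    by blast
  then show ?thesis
    using outside distinct Succ_Int_rho_closed_empty[OF assms(4)] by blast
qed

end
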